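(* Let $E/F$ be a quadratic extension of fields of characteristic $0$, $\beta\in\mathrm{GL}_n(E)$ skew-Hermitian, and $\zeta\in\mathrm{GL}_n(E)$ normal with respect to $\beta$ such that $\beta^{-1}\zeta^*\beta\zeta$ is regular semisimple. Then $T_\zeta=\{(g,h)\in\mathrm{U}_n^\beta(F)\times\mathrm{U}_n^\beta(F):g^{-1}\zeta h=\zeta\}$ is contained in the diagonal $\{(h,h):h\in\mathrm{U}_n^\beta(F)\}$; thus $T_\zeta$ identifies with the centralizer of $\zeta$ in $\mathrm{U}_n^\beta(F)$.
   Context: $g^*={}^t\bar g$ where $\bar{\ }$ is the nontrivial automorphism of $E/F$; $\beta$ skew-Hermitian means $\beta^*=-\beta$; $\mathrm{U}_n^\beta(F)=\{h\in\mathrm{GL}_n(E):h^*\beta h=\beta\}$. $\zeta$ is normal with respect to $\beta$ if $\zeta$ commutes with $\beta^{-1}\zeta^*\beta\zeta$. *)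

theory Defs
  imports "Jordan_Normal_Form.Char_Poly" "Jordan_Normal_Form.Gauss_Jordan_Elimination"
begin

text \<open>The nontrivial automorphism of a quadratic extension E/F: a field involution
  sigma of E different from the identity; F is then its fixed field.\<close>
definition quad_conj :: "('e::field \<Rightarrow> 'e) \<Rightarrow> bool" where
  "quad_conj s \<longleftrightarrow> (\<forall>x y. s (x + y) = s x + s y) \<and> (\<forall>x y. s (x * y) = s x * s y)
     \<and> s 1 = 1 \<and> (\<forall>x. s (s x) = x) \<and> (\<exists>x. s x \<noteq> x)"

definition fixed_field :: "('e \<Rightarrow> 'e) \<Rightarrow> 'e set" where
  "fixed_field s = {x. s x = x}"

definition GL :: "nat \<Rightarrow> 'e::field mat set" where
  "GL n = {A. A \<in> carrier_mat n n \<and> invertible_mat A}"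

definition minv :: "'e::field mat \<Rightarrow> 'e mat" where
  "minv A = the (mat_inverse A)"

definition star :: "('e \<Rightarrow> 'e) \<Rightarrow> 'e mat \<Rightarrow> 'e mat" where
  "star s g = transpose_mat (map_mat s g)"

definition skew_hermitian :: "('e::field \<Rightarrow> 'e) \<Rightarrow> 'e mat \<Rightarrow> bool" where
  "skew_hermitian s b \<longleftrightarrow> star s b = - b"

definition unitary_grp :: "('e::field \<Rightarrow> 'e) \<Rightarrow> nat \<Rightarrow> 'e mat \<Rightarrow> 'e mat set" where
  "unitary_grp s n b = {h \<in> GL n. star s h * b * h = b}"

definition normal_wrt :: "('e::field \<Rightarrow> 'e) \<Rightarrow> 'e mat \<Rightarrow> 'e mat \<Rightarrow> bool" where
  "normal_wrt s b z \<longleftrightarrow>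
     (let m = minv b * star s z * b * z in z * m = m * z)"

text \<open>Regular semisimple element of GL_n(E): the characteristic polynomial is
  separable (distinct eigenvalues over an algebraic closure).\<close>
definition regular_semisimple :: "'e::field mat \<Rightarrow> bool" where
  "regular_semisimple A \<longleftrightarrow> coprime (char_poly A) (pderiv (char_poly A))"

definition T_set :: "('e::field \<Rightarrow> 'e) \<Rightarrow> nat \<Rightarrow> 'e mat \<Rightarrow> 'e mat \<Rightarrow> ('e mat \<times> 'e mat) set" where
  "T_set s n b z = {(g, h). g \<in> unitary_grp s n b \<and> h \<in> unitary_grp s n b \<and> minv g * z * h = z}"

end

(* If g^-1 zeta h = zeta, i.e. zeta h = g zeta, then unitarity of g and h shows that h preserves
   the form zeta^* beta zeta, so h commutes with m = beta^-1 zeta^* beta zeta.  Normality says that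
   zeta commutes with m too.  Over an algebraic closure the regular semisimple m is diagonalizable
   with pairwise distinct eigenvalues, and in that eigenbasis everything commuting with m is
   diagonal; so the centralizer of m is commutative.  Hence h commutes with zeta and
   g = zeta h zeta^-1 = h. *)

theory Submission
  imports Defs "HOL-Algebra.Algebraic_Closure_Type"
begin

lemma coprime_poly_bezout:
  fixes p q :: "'a::field poly"
  assumes cop: "coprime p q"
  obtains x y where "x * p + y * q = 1"
proof -
  define I where "I = {x * p + y * q | x y. True}"
  have closed: "u * p + v * q \<in> I" for u v unfolding I_def by blast
  have "p \<noteq> 0 \<or> q \<noteq> 0"
    using cop by auto
  then obtain r0 where "r0 \<in> I - {0}"
    using closed[of 1 0] closed[of 0 1] by auto
  then obtain r where r: "r \<in> I - {0}"
    and min: "\<And>s. s \<in> I - {0} \<Longrightarrow> Polynomial.degree r \<le> Polynomial.degree s"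
    using ex_has_least_nat[of "\<lambda>r. r \<in> I - {0}" r0 Polynomial.degree] by blast
  obtain a b where rab: "r = a * p + b * q" using r unfolding I_def by blast
  have dvd_I: "r dvd z" if "z \<in> I" for z
  proof (rule ccontr)
    assume "\<not> r dvd z"
    hence nz: "z mod r \<noteq> 0" by (simp add: mod_eq_0_iff_dvd)
    obtain u v where z: "z = u * p + v * q" using \<open>z \<in> I\<close> unfolding I_def by blast
    have "z mod r = (u - z div r * a) * p + (v - z div r * b) * q"
      unfolding minus_div_mult_eq_mod[symmetric] z rab by (simp add: algebra_simps)
    hence "Polynomial.degree r \<le> Polynomial.degree (z mod r)" using nz closed by (intro min) auto
    moreover have "Polynomial.degree (z mod r) < Polynomial.degree r"
      using degree_mod_less[of r z] r nz by auto
    ultimately show False by simp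
  qed
  have "r dvd p" "r dvd q"
    using dvd_I[OF closed[of 1 0]] dvd_I[OF closed[of 0 1]] by simp_all
  hence "is_unit r"
    using cop coprime_common_divisor by blast
  then obtain k where "1 = r * k" by (rule dvdE)
  hence "(k * a) * p + (k * b) * q = 1" unfolding rab by (simp add: algebra_simps)
  thus thesis by (rule that)
qed

lemma (in field_hom) coprime_map_poly:
  assumes "coprime p q"
  shows "coprime (map_poly hom p) (map_poly hom q)"
proof -
  interpret map_poly_hom: map_poly_comm_ring_hom hom ..
  obtain x y where "x * p + y * q = 1"
    using coprime_poly_bezout[OF assms] .
  from arg_cong[OF this, of "map_poly hom"]
  have "map_poly hom x * map_poly hom p + map_poly hom y * map_poly hom q = 1"
    by (simp add: map_poly_hom.hom_add map_poly_hom.hom_mult)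
  thus ?thesis
    by (metis coprimeI dvd_add dvd_mult)
qed

lemma rsquarefree_map_poly:
  fixes hom :: "'a::field \<Rightarrow> 'b::field_char_0"
  assumes "field_hom hom" and "coprime p (pderiv p)"
  shows "rsquarefree (map_poly hom p)"
  using coprime_poly_0[OF field_hom.coprime_map_poly[OF assms]]
  by (simp add: rsquarefree_roots idom_hom.map_poly_pderiv[OF field_hom.axioms(1), OF assms(1)])

lemma rsquarefree_distinct_roots:
  fixes p :: "'a::alg_closed_field poly"
  assumes sf: "rsquarefree p"
  obtains rs where "distinct rs" "length rs = Polynomial.degree p" "set rs = {x. poly p x = 0}"
proof -
  have p0: "p \<noteq> 0" using sf unfolding rsquarefree_def by simp
  obtain M where size: "size M = Polynomial.degree p"
    and p: "p = Polynomial.smult (Polynomial.lead_coeff p) (\<Prod>x\<in>#M. [:-x, 1:])"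
    using alg_closed_imp_factorization[OF p0] by blast
  have "proots (\<Prod>x\<in>#M. [:-x, 1:]) = M" for M :: "'a multiset"
  proof (induction M)
    case (add x M)
    have "proots ([:-x, 1:] * (\<Prod>x\<in>#M. [:-x, 1:])) = add_mset x M"
      by (subst proots_mult) (auto simp: add.IH)
    thus ?case by simp
  qed simp
  hence M: "proots p = M"
    using p0 by (subst p) simp
  obtain rs where rs: "mset rs = proots p"
    using ex_mset by blast
  have "\<forall>x. count (proots p) x \<le> 1"
    using sf by (simp add: rsquarefree_def')
  hence "distinct rs"
    unfolding distinct_count_atmost_1 rs
    by (metis One_nat_def count_eq_zero_iff le_SucE le_zero_eq rs set_mset_mset)
  moreover have "length rs = Polynomial.degree p"
    using rs M size by (metis size_mset)
  moreover have "set rs = {x. poly p x = 0}"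
    using rs p0 by (metis set_count_proots set_mset_mset)
  ultimately show thesis
    by (rule that)
qed

lemma mult_eigenvector_mat:
  fixes A :: "'a::field mat" and v :: "nat \<Rightarrow> 'a vec"
  assumes A: "A \<in> carrier_mat n n" and ev: "\<And>j. j < n \<Longrightarrow> eigenvector A (v j) (e j)"
  shows "A * mat n n (\<lambda>(i, j). v j $ i) = mat n n (\<lambda>(i, j). v j $ i) * mat_diag n e"
    (is "A * ?V = ?V * _")
proof (rule eq_matI)
  have V: "?V \<in> carrier_mat n n" by simp
  fix i j assume "i < dim_row (?V * mat_diag n e)" "j < dim_col (?V * mat_diag n e)"
  hence i: "i < n" and j: "j < n" by (auto simp: mat_diag_def)
  have v: "v j \<in> carrier_vec n" "A *\<^sub>v v j = e j \<cdot>\<^sub>v v j"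
    using ev[OF j] A unfolding eigenvector_def by auto
  have "col ?V j = v j"
    using v(1) j by (auto intro!: eq_vecI)
  hence "(A * ?V) $$ (i, j) = (A *\<^sub>v v j) $ i"
    using A i j by simp
  thus "(A * ?V) $$ (i, j) = (?V * mat_diag n e) $$ (i, j)"
    using v i j by (simp add: mat_diag_mult_right[OF V])
qed (use A in \<open>auto simp: mat_diag_def\<close>)

lemma foldr_shift_mult_eigenvector_mat:
  fixes A :: "'a::field mat" and v :: "nat \<Rightarrow> 'a vec"
  assumes A: "A \<in> carrier_mat n n" and ev: "\<And>j. j < n \<Longrightarrow> eigenvector A (v j) (e j)"
  defines "V \<equiv> mat n n (\<lambda>(i, j). v j $ i)"
  shows "foldr (\<lambda>c M. (A - c \<cdot>\<^sub>m 1\<^sub>m n) * M) cs (1\<^sub>m n) \<in> carrier_mat n n \<and>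
    foldr (\<lambda>c M. (A - c \<cdot>\<^sub>m 1\<^sub>m n) * M) cs (1\<^sub>m n) * V =
      V * mat_diag n (\<lambda>j. \<Prod>c\<leftarrow>cs. e j - c)"
proof (induction cs)
  case Nil
  have "V \<in> carrier_mat n n" unfolding V_def by simp
  then show ?case by (simp add: mat_diag_one)
next
  case (Cons c cs)
  let ?P = "foldr (\<lambda>c M. (A - c \<cdot>\<^sub>m 1\<^sub>m n) * M) cs (1\<^sub>m n)" and ?M = "A - c \<cdot>\<^sub>m 1\<^sub>m n"
  note assoc = assoc_mult_mat[of _ n n _ n _ n]
  have V: "V \<in> carrier_mat n n" unfolding V_def by simp
  have M: "?M \<in> carrier_mat n n" using A by (intro minus_carrier_mat) auto
  have AV: "A * V = V * mat_diag n e"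
    unfolding V_def by (rule mult_eigenvector_mat[OF A ev])
  have shift: "?M * V = V * mat_diag n (\<lambda>j. e j - c)"
  proof -
    have "?M * V = V * mat_diag n e - c \<cdot>\<^sub>m V"
      using A V by (simp add: AV minus_mult_distrib_mat[of _ n n] mult_smult_assoc_mat[of _ n n])
    also have "\<dots> = V * mat_diag n (\<lambda>j. e j - c)"
      using V by (auto simp: mat_diag_mult_right algebra_simps intro!: eq_matI)
    finally show ?thesis .
  qed
  have "?M * ?P * V = ?M * (?P * V)"
    using M Cons.IH V by (simp add: assoc)
  also have "\<dots> = V * mat_diag n (\<lambda>j. \<Prod>c\<leftarrow>c # cs. e j - c)"
    using Cons.IH M V by (simp add: shift assoc[symmetric] assoc_mult_mat[of V n n _ n _ n])
  finally show ?case using M Cons.IH by simp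
qed

lemma det_eigenvector_mat_nonzero:
  fixes A :: "'a::field mat" and v :: "nat \<Rightarrow> 'a vec"
  assumes A: "A \<in> carrier_mat n n"
    and ev: "\<And>j. j < n \<Longrightarrow> eigenvector A (v j) (e j)" and inj: "inj_on e {..<n}"
  shows "det (mat n n (\<lambda>(i, j). v j $ i)) \<noteq> 0"
proof
  define V where "V = mat n n (\<lambda>(i, j). v j $ i)"
  have V: "V \<in> carrier_mat n n" unfolding V_def by simp
  assume "det (mat n n (\<lambda>(i, j). v j $ i)) = 0"
  then obtain x where x: "x \<in> carrier_vec n" "x \<noteq> 0\<^sub>v n" "V *\<^sub>v x = 0\<^sub>v n"
    using det_0_iff_vec_prod_zero_field[OF V] unfolding V_def by blast
  have "x $ i = 0" if i: "i < n" for i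
  proof -
    define cs where "cs = map e (filter (\<lambda>k. k \<noteq> i) [0..<n])"
    define c where "c j = (\<Prod>c\<leftarrow>cs. e j - c)" for j
    define P where "P = foldr (\<lambda>c M. (A - c \<cdot>\<^sub>m 1\<^sub>m n) * M) cs (1\<^sub>m n)"
    have ci: "c i \<noteq> 0"
      using inj i unfolding c_def cs_def by (auto simp: prod_list_zero_iff inj_on_def)
    have cj: "c j = 0" if "j < n" "j \<noteq> i" for j
      using that unfolding c_def cs_def by (auto simp: prod_list_zero_iff)
    have P: "P \<in> carrier_mat n n" "P * V = V * mat_diag n c"
      using foldr_shift_mult_eigenvector_mat[OF A ev, where cs = cs] unfolding P_def c_def V_def by auto
    have "v i $ r * (c i * x $ i) = 0" if r: "r < n" for r
    proof -
      have "0 = (P *\<^sub>v (V *\<^sub>v x)) $ r"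
        using x P r by simp
      also have "\<dots> = ((V * mat_diag n c) *\<^sub>v x) $ r"
        unfolding assoc_mult_mat_vec[OF P(1) V x(1), symmetric] P(2) ..
      also have "\<dots> = (\<Sum>j\<in>{0..<n}. V $$ (r, j) * c j * x $ j)"
        using V x r by (simp add: mat_diag_mult_right[OF V] scalar_prod_def)
      also have "\<dots> = (\<Sum>j\<in>{0..<n}. if j = i then v i $ r * (c i * x $ i) else 0)"
        using r cj by (intro sum.cong) (auto simp: V_def)
      finally show ?thesis using i by simp
    qed
    moreover obtain r where "r < n" "v i $ r \<noteq> 0"
      using ev[OF i] A unfolding eigenvector_def by (metis eq_vecI carrier_matD(1) carrier_vecD index_zero_vec)
    ultimately show "x $ i = 0" using ci by auto
  qed
  hence "x = 0\<^sub>v n" using x(1) by (auto intro!: eq_vecI)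
  with x(2) show False by simp
qed

lemma rsquarefree_char_poly_diagonalizable:
  fixes A :: "'a::alg_closed_field mat"
  assumes A: "A \<in> carrier_mat n n" and sf: "rsquarefree (char_poly A)"
  obtains P Q e where "similar_mat_wit A (mat_diag n e) P Q" and "inj_on e {..<n}"
proof -
  obtain es where es: "distinct es" "length es = n" "set es = {x. poly (char_poly A) x = 0}"
    using rsquarefree_distinct_roots[OF sf] degree_monic_char_poly[OF A] by metis
  have inj: "inj_on (\<lambda>j. es ! j) {..<n}"
    using es by (auto simp: inj_on_def nth_eq_iff_index_eq)
  have "\<exists>v. eigenvector A v (es ! j)" if "j < n" for j
    using es(2,3) that eigenvalue_root_char_poly[OF A] unfolding eigenvalue_def by auto
  then obtain v where ev: "\<And>j. j < n \<Longrightarrow> eigenvector A (v j) (es ! j)"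
    by metis
  define P where "P = mat n n (\<lambda>(i, j). v j $ i)"
  have P: "P \<in> carrier_mat n n" unfolding P_def by simp
  have AP: "A * P = P * mat_diag n (\<lambda>j. es ! j)"
    unfolding P_def by (rule mult_eigenvector_mat[OF A ev])
  have "det P \<noteq> 0"
    unfolding P_def by (rule det_eigenvector_mat_nonzero[OF A ev inj])
  then obtain Q where Q: "Q \<in> carrier_mat n n" "P * Q = 1\<^sub>m n" "Q * P = 1\<^sub>m n"
    using det_non_zero_imp_unit[OF P] unfolding Units_def ring_mat_def by auto
  have "A = A * P * Q"
    using A P Q by (simp add: assoc_mult_mat[of A n n P n Q n])
  also have "\<dots> = P * mat_diag n (\<lambda>j. es ! j) * Q"
    unfolding AP ..
  finally have "similar_mat_wit A (mat_diag n (\<lambda>j. es ! j)) P Q"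
    using A P Q by (intro similar_mat_witI[of _ _ n]) auto
  thus thesis using inj by (rule that)
qed

lemma commute_mat_diag_imp_diagonal:
  fixes B :: "'a::idom mat"
  assumes B: "B \<in> carrier_mat n n" and inj: "inj_on f {..<n}"
    and comm: "mat_diag n f * B = B * mat_diag n f"
  shows "B = mat_diag n (\<lambda>i. B $$ (i, i))"
proof (rule eq_matI)
  fix i j assume "i < dim_row (mat_diag n (\<lambda>i. B $$ (i, i)))" "j < dim_col (mat_diag n (\<lambda>i. B $$ (i, i)))"
  hence i: "i < n" and j: "j < n" by (auto simp: mat_diag_def)
  have "f i * B $$ (i, j) = B $$ (i, j) * f j"
    using arg_cong[OF comm, of "\<lambda>M. M $$ (i, j)"] i j
    by (simp add: mat_diag_mult_left[OF B] mat_diag_mult_right[OF B])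
  hence "(f i - f j) * B $$ (i, j) = 0"
    by (simp add: algebra_simps)
  moreover have "f i \<noteq> f j" if "i \<noteq> j"
    using inj i j that by (auto dest: inj_onD)
  ultimately show "B $$ (i, j) = mat_diag n (\<lambda>i. B $$ (i, i)) $$ (i, j)"
    using i j by (auto simp: mat_diag_def)
qed (use B in \<open>auto simp: mat_diag_def\<close>)

lemma similar_mat_wit_conj:
  assumes B: "B \<in> carrier_mat n n" and P: "P \<in> carrier_mat n n" and Q: "Q \<in> carrier_mat n n"
    and PQ: "P * Q = 1\<^sub>m n" and QP: "Q * P = 1\<^sub>m n"
  shows "similar_mat_wit B (Q * B * P) P Q"
proof (rule similar_mat_witI[OF PQ QP _ B _ P Q])
  have "P * (Q * B * P) * Q = (P * Q) * B * (P * Q)"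
    using B P Q by (simp add: assoc_mult_mat[of _ n n _ n _ n])
  thus "B = P * (Q * B * P) * Q"
    unfolding PQ using B by simp
qed (use B P Q in simp)

lemma similar_mat_wit_mult:
  assumes A: "similar_mat_wit A A' P Q" and B: "similar_mat_wit B B' P Q"
  shows "similar_mat_wit (A * B) (A' * B') P Q"
proof -
  define n where "n = dim_row P"
  have "n = dim_row A" "n = dim_row B"
    using similar_mat_witD(6)[OF refl A] similar_mat_witD(6)[OF refl B] unfolding n_def by auto
  note a = similar_mat_witD[OF this(1) A] and b = similar_mat_witD[OF this(2) B]
  note assoc = assoc_mult_mat[of _ n n _ n _ n]
  have "A * B = P * A' * (Q * P) * B' * Q"
    unfolding a(3) b(3) using a(4-7) b(4-7) by (simp add: assoc)
  also have "\<dots> = P * (A' * B') * Q"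
    unfolding a(2) using a(4-7) b(4-7) by (simp add: assoc)
  finally show ?thesis
    using a b by (intro similar_mat_witI[of P Q n]) auto
qed

lemma similar_mat_wit_eq_iff:
  assumes A: "similar_mat_wit A A' P Q" and B: "similar_mat_wit B B' P Q"
  shows "A = B \<longleftrightarrow> A' = B'"
proof
  assume "A = B"
  thus "A' = B'"
    unfolding similar_mat_witD(3)[OF refl similar_mat_wit_sym[OF A]]
      similar_mat_witD(3)[OF refl similar_mat_wit_sym[OF B]] by simp
next
  assume "A' = B'"
  thus "A = B"
    unfolding similar_mat_witD(3)[OF refl A] similar_mat_witD(3)[OF refl B] by simp
qed

lemma rsquarefree_centralizer_commutative:
  fixes A B C :: "'a::alg_closed_field mat"
  assumes A: "A \<in> carrier_mat n n" and B: "B \<in> carrier_mat n n" and C: "C \<in> carrier_mat n n"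
    and sf: "rsquarefree (char_poly A)" and AB: "A * B = B * A" and AC: "A * C = C * A"
  shows "B * C = C * B"
proof -
  obtain P Q e where simA: "similar_mat_wit A (mat_diag n e) P Q" and inj: "inj_on e {..<n}"
    using rsquarefree_char_poly_diagonalizable[OF A sf] .
  have PQ: "{P, Q} \<subseteq> carrier_mat n n" "P * Q = 1\<^sub>m n" "Q * P = 1\<^sub>m n"
    using similar_mat_witD2[OF A simA] by auto
  have conj_diag: "similar_mat_wit M (mat_diag n (\<lambda>i. (Q * M * P) $$ (i, i))) P Q"
    if M: "M \<in> carrier_mat n n" and AM: "A * M = M * A" for M
  proof -
    have simM: "similar_mat_wit M (Q * M * P) P Q"
      using PQ M by (intro similar_mat_wit_conj[of _ n]) auto
    have "mat_diag n e * (Q * M * P) = Q * M * P * mat_diag n e"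
      by (rule iffD1[OF similar_mat_wit_eq_iff[OF similar_mat_wit_mult[OF simA simM]
            similar_mat_wit_mult[OF simM simA]] AM])
    hence "Q * M * P = mat_diag n (\<lambda>i. (Q * M * P) $$ (i, i))"
      using PQ M by (intro commute_mat_diag_imp_diagonal[OF _ inj]) auto
    from subst[where P = "\<lambda>D. similar_mat_wit M D P Q", OF this simM] show ?thesis .
  qed
  let ?b = "\<lambda>i. (Q * B * P) $$ (i, i)" and ?c = "\<lambda>i. (Q * C * P) $$ (i, i)"
  have "mat_diag n ?b * mat_diag n ?c = mat_diag n ?c * mat_diag n ?b"
    by (simp add: mult.commute)
  thus ?thesis
    by (rule iffD2[OF similar_mat_wit_eq_iff[OF
          similar_mat_wit_mult[OF conj_diag[OF B AB] conj_diag[OF C AC]]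
          similar_mat_wit_mult[OF conj_diag[OF C AC] conj_diag[OF B AB]]]])
qed

interpretation to_ac_hom: field_hom "to_ac :: 'a::field \<Rightarrow> 'a alg_closure"
  by unfold_locales auto

lemma regular_semisimple_centralizer_commutative:
  fixes A B C :: "'a::field_char_0 mat"
  assumes A: "A \<in> carrier_mat n n" and B: "B \<in> carrier_mat n n" and C: "C \<in> carrier_mat n n"
    and rs: "regular_semisimple A" and AB: "A * B = B * A" and AC: "A * C = C * A"
  shows "B * C = C * B"
proof -
  let ?h = "map_mat (to_ac :: 'a \<Rightarrow> 'a alg_closure)"
  have sf: "rsquarefree (char_poly (?h A))"
    using rsquarefree_map_poly[OF to_ac_hom.field_hom_axioms rs[unfolded regular_semisimple_def]]
    by (simp add: to_ac_hom.char_poly_hom[OF A])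
  have comm: "?h A * ?h B = ?h B * ?h A" "?h A * ?h C = ?h C * ?h A"
    unfolding to_ac_hom.mat_hom_mult[OF A B, symmetric] to_ac_hom.mat_hom_mult[OF B A, symmetric]
      to_ac_hom.mat_hom_mult[OF A C, symmetric] to_ac_hom.mat_hom_mult[OF C A, symmetric] AB AC
    by simp_all
  have "?h B * ?h C = ?h C * ?h B"
    by (rule rsquarefree_centralizer_commutative[OF _ _ _ sf comm]) (use A B C in simp_all)
  hence "?h (B * C) = ?h (C * B)"
    using B C by (simp add: to_ac_hom.mat_hom_mult)
  thus ?thesis by (rule to_ac_hom.mat_hom_inj)
qed

lemma minv_GL:
  fixes A :: "'a::field mat"
  assumes "A \<in> GL n"
  shows "minv A \<in> carrier_mat n n" "A * minv A = 1\<^sub>m n" "minv A * A = 1\<^sub>m n"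
proof -
  have A: "A \<in> carrier_mat n n" and inv: "invertible_mat A" using assms unfolding GL_def by auto
  obtain B where AB: "A * B = 1\<^sub>m n" and BA: "B * A = 1\<^sub>m (dim_row B)"
    using inv A unfolding invertible_mat_def inverts_mat_def by auto
  have "dim_col B = n" using arg_cong[OF AB, of dim_col] by simp
  moreover have "dim_row B = n" using arg_cong[OF BA, of dim_col] A by simp
  ultimately have B: "B \<in> carrier_mat n n" by auto
  have U: "A \<in> Units (ring_mat TYPE('a) n ())"
    unfolding Units_def ring_mat_def using A B AB BA \<open>dim_row B = n\<close> by auto
  have "mat_inverse A \<noteq> None"
  proof
    assume "mat_inverse A = None"
    from mat_inverse(1)[where b="()", OF A this] U show False by blast
  qed
  then obtain C where C: "mat_inverse A = Some C" by auto
  have "A * C = 1\<^sub>m n \<and> C * A = 1\<^sub>m n \<and> C \<in> carrier_mat n n" by (rule mat_inverse(2)[OF A C])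
  thus "minv A \<in> carrier_mat n n" "A * minv A = 1\<^sub>m n" "minv A * A = 1\<^sub>m n"
    unfolding minv_def C by auto
qed

lemma GL_mult_right_cancel:
  assumes z: "\<zeta> \<in> GL n" and "A \<in> carrier_mat n n" "B \<in> carrier_mat n n"
    and "A * \<zeta> = B * \<zeta>"
  shows "A = B"
proof -
  have zi: "minv \<zeta> \<in> carrier_mat n n" "\<zeta> * minv \<zeta> = 1\<^sub>m n" and zc: "\<zeta> \<in> carrier_mat n n"
    using minv_GL[OF z] z unfolding GL_def by auto
  have "A = A * \<zeta> * minv \<zeta>"
    using assms(2) zi zc by (simp add: assoc_mult_mat[of _ n n _ n _ n])
  also have "\<dots> = B * \<zeta> * minv \<zeta>"
    unfolding assms(4) ..
  also have "\<dots> = B"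
    using assms(3) zi zc by (simp add: assoc_mult_mat[of _ n n _ n _ n])
  finally show ?thesis .
qed

lemma quad_conj_comm_ring_hom:
  assumes "quad_conj s"
  shows "comm_ring_hom s"
proof -
  have "s (0 + 0) = s 0 + s 0"
    using assms unfolding quad_conj_def by blast
  hence "s 0 = 0" by (metis add_0_right add_cancel_right_right)
  thus ?thesis
    using assms unfolding quad_conj_def by unfold_locales auto
qed

lemma star_mult:
  assumes "quad_conj s" and A: "A \<in> carrier_mat n n" and B: "B \<in> carrier_mat n n"
  shows "star s (A * B) = star s B * star s A"
proof -
  interpret comm_ring_hom s
    using quad_conj_comm_ring_hom[OF assms(1)] .
  show ?thesis
    unfolding star_def mat_hom_mult[OF A B] using A B by (simp add: transpose_mult)
qed

lemma unitary_commute_invariant: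
  assumes b: "\<beta> \<in> GL n" and h: "h \<in> unitary_grp s n \<beta>" and N: "N \<in> carrier_mat n n"
    and inv: "star s h * N * h = N"
  shows "minv \<beta> * N * h = h * (minv \<beta> * N)"
proof -
  note assoc = assoc_mult_mat[of _ n n _ n _ n]
  have hG: "h \<in> carrier_mat n n" and hU: "star s h * \<beta> * h = \<beta>"
    using h unfolding unitary_grp_def GL_def by auto
  have bc: "\<beta> \<in> carrier_mat n n"
    using b unfolding GL_def by auto
  note bi = minv_GL[OF b]
  have hs: "star s h \<in> carrier_mat n n"
    using hG unfolding star_def by simp
  have inv_left: "(minv \<beta> * star s h * \<beta>) * h = 1\<^sub>m n"
    using hU bi hs bc hG by (simp add: assoc)
  have inv_right: "h * (minv \<beta> * star s h * \<beta>) = 1\<^sub>m n"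
    by (rule mat_mult_left_right_inverse[OF _ hG inv_left]) (use bi hs bc in simp)
  have "h * minv \<beta> * star s h = h * (minv \<beta> * star s h * \<beta>) * minv \<beta>"
    using bi hs bc hG by (simp add: assoc)
  hence hbh: "h * minv \<beta> * star s h = minv \<beta>"
    unfolding inv_right using bi by simp
  have "h * (minv \<beta> * N) = h * minv \<beta> * (star s h * N * h)"
    using inv hG bi N by (simp add: assoc)
  also have "\<dots> = (h * minv \<beta> * star s h) * N * h"
    using hG bi hs N by (simp add: assoc)
  also have "\<dots> = minv \<beta> * N * h"
    unfolding hbh ..
  finally show ?thesis ..
qed

lemma T_set_intertwines:
  assumes "(g, h) \<in> T_set s n \<beta> \<zeta>" and z: "\<zeta> \<in> GL n"
  shows "\<zeta> * h = g * \<zeta>"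
proof -
  have gG: "g \<in> GL n" and g: "g \<in> carrier_mat n n" and h: "h \<in> carrier_mat n n"
    and Te: "minv g * \<zeta> * h = \<zeta>"
    using assms(1) unfolding T_set_def unitary_grp_def GL_def by auto
  have zc: "\<zeta> \<in> carrier_mat n n"
    using z unfolding GL_def by auto
  note gi = minv_GL[OF gG]
  have "g * \<zeta> = g * (minv g * \<zeta> * h)"
    unfolding Te ..
  also have "\<dots> = (g * minv g) * \<zeta> * h"
    using gi(1) g zc h by (simp add: assoc_mult_mat[of _ n n _ n _ n])
  also have "\<dots> = \<zeta> * h"
    unfolding gi(2) using zc h by simp
  finally show ?thesis ..
qed

lemma T_set_preserves_form:
  assumes q: "quad_conj s" and T: "(g, h) \<in> T_set s n \<beta> \<zeta>" and z: "\<zeta> \<in> GL n"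
    and b: "\<beta> \<in> GL n"
  shows "star s h * (star s \<zeta> * \<beta> * \<zeta>) * h = star s \<zeta> * \<beta> * \<zeta>"
proof -
  note assoc = assoc_mult_mat[of _ n n _ n _ n]
  have g: "g \<in> carrier_mat n n" and h: "h \<in> carrier_mat n n" and gU: "star s g * \<beta> * g = \<beta>"
    using T unfolding T_set_def unitary_grp_def GL_def by auto
  have zc: "\<zeta> \<in> carrier_mat n n" and bc: "\<beta> \<in> carrier_mat n n"
    using z b unfolding GL_def by auto
  have stars: "star s g \<in> carrier_mat n n" "star s h \<in> carrier_mat n n" "star s \<zeta> \<in> carrier_mat n n"
    using g h zc unfolding star_def by auto
  have "star s h * (star s \<zeta> * \<beta> * \<zeta>) * h = star s (\<zeta> * h) * \<beta> * (\<zeta> * h)"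
    using star_mult[OF q zc h] stars zc h bc by (simp add: assoc)
  also have "\<dots> = star s (g * \<zeta>) * \<beta> * (g * \<zeta>)"
    unfolding T_set_intertwines[OF T z] ..
  also have "\<dots> = star s \<zeta> * (star s g * \<beta> * g) * \<zeta>"
    using star_mult[OF q g zc] stars zc g bc by (simp add: assoc)
  finally show ?thesis
    unfolding gU .
qed

lemma T_set_diagonal:
  fixes s :: "'e::field_char_0 \<Rightarrow> 'e"
  assumes q: "quad_conj s" and b: "\<beta> \<in> GL n" and z: "\<zeta> \<in> GL n"
    and nrm: "normal_wrt s \<beta> \<zeta>" and rs: "regular_semisimple (minv \<beta> * star s \<zeta> * \<beta> * \<zeta>)"
    and T: "(g, h) \<in> T_set s n \<beta> \<zeta>"
  shows "g = h \<and> h * \<zeta> = \<zeta> * h"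
proof -
  let ?m = "minv \<beta> * star s \<zeta> * \<beta> * \<zeta>"
  have hU: "h \<in> unitary_grp s n \<beta>" and g: "g \<in> carrier_mat n n" and h: "h \<in> carrier_mat n n"
    using T unfolding T_set_def unitary_grp_def GL_def by auto
  have zc: "\<zeta> \<in> carrier_mat n n" and bc: "\<beta> \<in> carrier_mat n n"
    using z b unfolding GL_def by auto
  have zs: "star s \<zeta> \<in> carrier_mat n n"
    using zc unfolding star_def by simp
  note bi = minv_GL(1)[OF b]
  have m: "?m \<in> carrier_mat n n"
    using bi zs bc zc by (metis mult_carrier_mat)
  have "?m = minv \<beta> * (star s \<zeta> * \<beta> * \<zeta>)"
    using bi zs bc zc by (simp add: assoc_mult_mat[of _ n n _ n _ n])
  hence mh: "?m * h = h * ?m"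
    using unitary_commute_invariant[OF b hU _ T_set_preserves_form[OF q T z b]] zs bc zc by simp
  have mz: "?m * \<zeta> = \<zeta> * ?m"
    using nrm unfolding normal_wrt_def Let_def by simp
  have hz: "h * \<zeta> = \<zeta> * h"
    by (rule regular_semisimple_centralizer_commutative[OF m h zc rs mh mz])
  have "g * \<zeta> = h * \<zeta>"
    using T_set_intertwines[OF T z] hz by simp
  hence "g = h"
    by (rule GL_mult_right_cancel[OF z g h])
  with hz show ?thesis by simp
qed

lemma centralizer_mem_T_set:
  assumes hU: "h \<in> unitary_grp s n \<beta>" and z: "\<zeta> \<in> GL n" and hz: "h * \<zeta> = \<zeta> * h"
  shows "(h, h) \<in> T_set s n \<beta> \<zeta>"
proof -
  have hG: "h \<in> GL n" and h: "h \<in> carrier_mat n n" and zc: "\<zeta> \<in> carrier_mat n n"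
    using hU z unfolding unitary_grp_def GL_def by auto
  note hi = minv_GL[OF hG]
  have "minv h * \<zeta> * h = minv h * (h * \<zeta>)"
    unfolding hz using hi(1) zc h by (simp add: assoc_mult_mat[of _ n n _ n _ n])
  also have "\<dots> = (minv h * h) * \<zeta>"
    using hi(1) zc h by (simp add: assoc_mult_mat[of _ n n _ n _ n])
  also have "\<dots> = \<zeta>"
    unfolding hi(3) using zc by simp
  finally show ?thesis
    unfolding T_set_def using hU by simp
qed

theorem mainTheorem10:
  fixes s :: "'e::field_char_0 \<Rightarrow> 'e" and n :: nat and \<beta> \<zeta> :: "'e mat"
  assumes "quad_conj s"
    and "\<beta> \<in> GL n" and "skew_hermitian s \<beta>"
    and "\<zeta> \<in> GL n" and "normal_wrt s \<beta> \<zeta>"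
    and "regular_semisimple (minv \<beta> * star s \<zeta> * \<beta> * \<zeta>)"
  shows "T_set s n \<beta> \<zeta> \<subseteq> {(h, h) | h. h \<in> unitary_grp s n \<beta>}
    \<and> T_set s n \<beta> \<zeta> = {(h, h) | h. h \<in> unitary_grp s n \<beta> \<and> h * \<zeta> = \<zeta> * h}"
proof -
  have "T_set s n \<beta> \<zeta> \<subseteq> {(h, h) | h. h \<in> unitary_grp s n \<beta> \<and> h * \<zeta> = \<zeta> * h}"
  proof (clarify)
    fix g h assume T: "(g, h) \<in> T_set s n \<beta> \<zeta>"
    hence "h \<in> unitary_grp s n \<beta>"
      unfolding T_set_def by simp
    with T_set_diagonal[OF assms(1,2,4,5,6) T]
    show "\<exists>k. (g, h) = (k, k) \<and> k \<in> unitary_grp s n \<beta> \<and> k * \<zeta> = \<zeta> * k" by blast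
  qed
  moreover have "{(h, h) | h. h \<in> unitary_grp s n \<beta> \<and> h * \<zeta> = \<zeta> * h} \<subseteq> T_set s n \<beta> \<zeta>"
    using centralizer_mem_T_set[OF _ assms(4)] by blast
  ultimately show ?thesis by blast
qed

end
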